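(* For $n=3$, at every point of $\mathbb C_3$ one has $\mathcal D_3+[\mathcal D_3,\mathcal D_3]=T\mathbb C_3$. More precisely, $\xi_1,\xi_2,\xi_3,[\xi_1,\xi_2],[\xi_2,\xi_3]$ span the $5$-dimensional tangent space of $\mathbb C_3$ at every point; so $\mathcal D_3$ has growth vector $(3,5)$ everywhere.
   Context: $\mathcal P_3$ is the $6$-dimensional manifold of (nondegenerate) triangles in $\mathbb R^2$. A triangle is encoded by its counterclockwise-ordered side lines $L_i=\{x\cos\alpha_i+y\sin\alpha_i=p_i\}$, $i\in\mathbb Z/3$, with $(\cos\alpha_i,\sin\alpha_i)$ the outer unit normal. For each $i$, let $C_i$ be the tangency point with $L_i$ of the excircle of the triangle opposite to the side on $L_i$. This is the circle tangent to the three lines lying on the triangle's side of $L_{i\pm1}$ and on the opposite side of $L_i$. $\xi_i$ is the vector field given by the infinitesimal counterclockwise rotation of $L_i$ about $C_i$, other sides fixed. In coordinates $\xi_i=\partial_{\alpha_i}+\Phi_i\partial_{p_i}$ with $$\Phi_i=\frac{\cos^2\!\big(\frac{\alpha_i-\alpha_{i-1}}2\big)(p_{i+1}+p_i)-\cos^2\!\big(\frac{\alpha_{i+1}-\alpha_i}2\big)(p_{i-1}+p_i)}{2\sin\!\big(\frac{\alpha_{i+1}-\alpha_{i-1}}2\big)\cos\!\big(\frac{\alpha_i-\alpha_{i-1}}2\big)\cos\!\big(\frac{\alpha_{i+1}-\alpha_i}2\big)}.$$ $\mathcal D_3=\mathrm{span}(\xi_1,\xi_2,\xi_3)$ is tangent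 to the level sets of the perimeter. $\mathbb C_3$ is a level set of the perimeter (triangles of a fixed perimeter), a $5$-dimensional manifold. *)

theory Defs
  imports "HOL-Analysis.Analysis"
begin

text \<open>Coordinates on the space of triangles: a point is a pair (alpha, p) of
  vectors indexed by the cyclic type 3 (so i+1 and i-1 are taken mod 3).
  Side i lies on the line x cos(alpha i) + y sin(alpha i) = p i, with outer
  unit normal (cos(alpha i), sin(alpha i)).\<close>

type_synonym tri = "(real^3) \<times> (real^3)"

definition tri_alpha :: "tri \<Rightarrow> 3 \<Rightarrow> real" where
  "tri_alpha z i = fst z $ i"

definition tri_p :: "tri \<Rightarrow> 3 \<Rightarrow> real" where
  "tri_p z i = snd z $ i"

text \<open>The open set P3 of nondegenerate triangles with counterclockwise ordered
  sides: consecutive outer normals turn counterclockwise by an angle in (0,pi),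
  and the triangle has an interior point.\<close>
definition is_triangle :: "tri \<Rightarrow> bool" where
  "is_triangle z \<longleftrightarrow>
     (\<forall>i::3. sin (tri_alpha z (i+1) - tri_alpha z i) > 0) \<and>
     (\<exists>x y. \<forall>i::3. x * cos (tri_alpha z i) + y * sin (tri_alpha z i) < tri_p z i)"

text \<open>Vertex L_i \<inter> L_(i+1).\<close>
definition tri_vertex :: "tri \<Rightarrow> 3 \<Rightarrow> real^2" where
  "tri_vertex z i =
     (let a = tri_alpha z i; b = tri_alpha z (i+1); p = tri_p z i; q = tri_p z (i+1)
      in vector [(p * sin b - q * sin a) / sin (b - a),
                 (q * cos a - p * cos b) / sin (b - a)])"

text \<open>Perimeter: the side on L_i joins the vertices L_(i-1)\<inter>L_i and L_i\<inter>L_(i+1).\<close>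
definition perimeter :: "tri \<Rightarrow> real" where
  "perimeter z = (\<Sum>i\<in>UNIV. dist (tri_vertex z (i - 1)) (tri_vertex z i))"

definition Phi :: "3 \<Rightarrow> tri \<Rightarrow> real" where
  "Phi i z =
     (let am = tri_alpha z (i - 1); a = tri_alpha z i; ap = tri_alpha z (i+1);
          pm = tri_p z (i - 1); p = tri_p z i; pp = tri_p z (i+1)
      in ((cos ((a - am)/2))\<^sup>2 * (pp + p) - (cos ((ap - a)/2))\<^sup>2 * (pm + p)) /
         (2 * sin ((ap - am)/2) * cos ((a - am)/2) * cos ((ap - a)/2)))"

definition xi :: "3 \<Rightarrow> tri \<Rightarrow> tri" where
  "xi i z = ((\<chi> j. if j = i then 1 else 0), (\<chi> j. if j = i then Phi i z else 0))"

definition lie_bracket :: "(tri \<Rightarrow> tri) \<Rightarrow> (tri \<Rightarrow> tri) \<Rightarrow> tri \<Rightarrow> tri" where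
  "lie_bracket X Y z = frechet_derivative Y (at z) (X z) - frechet_derivative X (at z) (Y z)"

end

theory Submission
  imports Defs
begin

text \<open>Write T_k = tan ((alpha_k - alpha_(k-1)) / 2) for the half-tangents of the turning angles of
  the outer normals; on triangles they are positive and T_1 + T_2 + T_3 = T_1 T_2 T_3. In these
  terms the perimeter is the sum of T_k (p_(k-1) + p_k) and Phi_k is rational, so the differential
  of the perimeter is v \<mapsto> g \<bullet> v for an explicit g whose p_k-component c_k = T_k + T_(k+1) is
  positive, and its kernel has dimension 5. The xi_k lie in the kernel. As xi_k = (e_k, Phi_k e_k),
  the bracket [xi_k, xi_(k+1)] has no alpha-part: it is w_k (0, e_(k+1) / c_(k+1) - e_k / c_k) with
  w_k > 0. Removing from a kernel vector the combination of the xi_k given by its alpha-coordinates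
  leaves some (0, q) with c \<bullet> q = 0, and these vectors form the plane spanned by [xi_1, xi_2] and
  [xi_2, xi_3].\<close>

section \<open>Half-angle tangents of the turning angles\<close>

lemma sin_pos_half_angle:
  fixes t :: real
  assumes "sin t > 0"
  shows "cos (t/2) \<noteq> 0" and "tan (t/2) > 0"
proof -
  have sin_t: "sin t = 2 * sin (t/2) * cos (t/2)"
    using sin_double[of "t/2"] by simp
  then show "cos (t/2) \<noteq> 0" using assms by auto
  have "sin (t/2) * cos (t/2) > 0" using sin_t assms by (simp add: mult.commute)
  then show "tan (t/2) > 0"
    unfolding tan_def by (simp add: zero_less_divide_iff zero_less_mult_iff)
qed

lemma tan_sum_eq_prod:
  assumes "cos x \<noteq> 0" "cos y \<noteq> 0" "cos u \<noteq> 0" "x + y + u = 0"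
  shows "tan x + tan y + tan u = tan x * tan y * tan u"
proof -
  have "sin (x + y + u) = 0" using assms(4) by simp
  then have "sin x * cos y * cos u + cos x * sin y * cos u + cos x * cos y * sin u
      = sin x * sin y * sin u"
    by (simp add: sin_add cos_add algebra_simps)
  then show ?thesis using assms unfolding tan_def by (simp add: field_simps)
qed

lemma plus_one_plus_one_3 [simp]: "(k::3) + 1 + 1 = k - 1"
  using exhaust_3[of k] by auto

lemma minus_one_minus_one_3 [simp]: "(k::3) - 1 - 1 = k + 1"
  using exhaust_3[of k] by auto

lemma numerals_3: "(0::3) = 3" "(4::3) = 1" "(1::3) + 1 = 2" "(2::3) + 1 = 3" "(3::3) + 1 = 1"
  by simp_all

definition turn :: "tri \<Rightarrow> 3 \<Rightarrow> real" where
  "turn w k = tri_alpha w k - tri_alpha w (k - 1)"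

definition half_tan :: "tri \<Rightarrow> 3 \<Rightarrow> real" where
  "half_tan w k = tan (turn w k / 2)"

lemma turn_succ: "turn w (k + 1) = tri_alpha w (k + 1) - tri_alpha w k"
  by (simp add: turn_def)

lemma turn_pred: "turn w (k - 1) = tri_alpha w (k - 1) - tri_alpha w (k + 1)"
  by (simp add: turn_def)

lemma sin_turn: "sin (turn w k) = 2 * half_tan w k / (1 + (half_tan w k)\<^sup>2)"
  using sin_tan_half[of "turn w k / 2"] by (simp add: half_tan_def)

lemma triangle_sin_turn_pos: "is_triangle w \<Longrightarrow> sin (turn w k) > 0"
  unfolding is_triangle_def turn_def by (metis diff_add_cancel)

lemma triangle_cos_half_turn: "is_triangle w \<Longrightarrow> cos (turn w k / 2) \<noteq> 0"
  using sin_pos_half_angle(1)[OF triangle_sin_turn_pos] .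

lemma triangle_half_tan_pos: "is_triangle w \<Longrightarrow> half_tan w k > 0"
  unfolding half_tan_def using sin_pos_half_angle(2)[OF triangle_sin_turn_pos] .

lemma triangle_cos_turn:
  "is_triangle w \<Longrightarrow> cos (turn w k) = (1 - (half_tan w k)\<^sup>2) / (1 + (half_tan w k)\<^sup>2)"
  using cos_tan_half[OF triangle_cos_half_turn, of w k] by (simp add: half_tan_def)

lemma triangle_half_tan_sum_eq_prod:
  assumes "is_triangle w"
  shows "half_tan w k + half_tan w (k + 1) + half_tan w (k - 1)
       = half_tan w k * half_tan w (k + 1) * half_tan w (k - 1)"
proof -
  have "turn w k / 2 + turn w (k + 1) / 2 + turn w (k - 1) / 2 = 0"
    unfolding turn_succ turn_pred by (simp add: turn_def field_simps)
  then show ?thesis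
    unfolding half_tan_def using triangle_cos_half_turn[OF assms] by (intro tan_sum_eq_prod)
qed

section \<open>The perimeter and its differential\<close>

text \<open>With the coordinates of tri_vertex, the vertices on the line with normal angle b differ
  by L times its unit direction (sin b, - cos b); L is the signed length of that side.\<close>

lemma vertex_difference:
  fixes a b c p q r :: real
  assumes "sin (b - a) \<noteq> 0" "sin (c - b) \<noteq> 0"
  defines "L \<equiv> (r - q * cos (c - b)) / sin (c - b) + (p - q * cos (b - a)) / sin (b - a)"
  shows "(p * sin b - q * sin a) / sin (b - a) - (q * sin c - r * sin b) / sin (c - b)
           = L * sin b"
    and "(q * cos a - p * cos b) / sin (b - a) - (r * cos b - q * cos c) / sin (c - b)
           = - L * cos b"
proof -
  have pyth: "(sin a)\<^sup>2 + (cos a)\<^sup>2 = 1" "(sin b)\<^sup>2 + (cos b)\<^sup>2 = 1" "(sin c)\<^sup>2 + (cos c)\<^sup>2 = 1"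
    by simp_all
  show "(p * sin b - q * sin a) / sin (b - a) - (q * sin c - r * sin b) / sin (c - b)
      = L * sin b"
    using assms unfolding L_def sin_diff cos_diff by (simp add: divide_simps) (use pyth in algebra)
  show "(q * cos a - p * cos b) / sin (b - a) - (r * cos b - q * cos c) / sin (c - b)
      = - L * cos b"
    using assms unfolding L_def sin_diff cos_diff by (simp add: divide_simps) (use pyth in algebra)
qed

lemma side_length_pos:
  fixes a b c p q r x y :: real
  assumes "sin (b - a) > 0" "sin (c - b) > 0" "sin (a - c) > 0"
    and "x * cos a + y * sin a < p" "x * cos b + y * sin b < q" "x * cos c + y * sin c < r"
  shows "(r - q * cos (c - b)) / sin (c - b) + (p - q * cos (b - a)) / sin (b - a) > 0"
proof -
  define d0 where "d0 = p - (x * cos a + y * sin a)"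
  define d1 where "d1 = q - (x * cos b + y * sin b)"
  define d2 where "d2 = r - (x * cos c + y * sin c)"
  have d_pos: "d0 > 0" "d1 > 0" "d2 > 0" using assms unfolding d0_def d1_def d2_def by auto
  have pyth: "(sin a)\<^sup>2 + (cos a)\<^sup>2 = 1" "(sin b)\<^sup>2 + (cos b)\<^sup>2 = 1" "(sin c)\<^sup>2 + (cos c)\<^sup>2 = 1"
    by simp_all
  have "(r - q * cos (c - b)) / sin (c - b) + (p - q * cos (b - a)) / sin (b - a)
     = d2 / sin (c - b) + d0 / sin (b - a) + d1 * sin (a - c) / (sin (c - b) * sin (b - a))"
    using assms(1,2) unfolding d0_def d1_def d2_def sin_diff cos_diff
    by (simp add: divide_simps) (use pyth in algebra)
  also have "\<dots> > 0" using d_pos assms(1-3) by (intro add_pos_pos divide_pos_pos mult_pos_pos) auto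
  finally show ?thesis .
qed

lemma triangle_side_length:
  assumes "is_triangle w"
  shows "dist (tri_vertex w (k - 1)) (tri_vertex w k)
       = (tri_p w (k + 1) - tri_p w k * cos (turn w (k + 1))) / sin (turn w (k + 1))
       + (tri_p w (k - 1) - tri_p w k * cos (turn w k)) / sin (turn w k)"
proof -
  obtain x y where xy: "\<And>i. x * cos (tri_alpha w i) + y * sin (tri_alpha w i) < tri_p w i"
    using assms unfolding is_triangle_def by blast
  define a b c where angles: "a = tri_alpha w (k - 1)" "b = tri_alpha w k" "c = tri_alpha w (k + 1)"
  define p q r where offsets: "p = tri_p w (k - 1)" "q = tri_p w k" "r = tri_p w (k + 1)"
  define L where "L = (r - q * cos (c - b)) / sin (c - b) + (p - q * cos (b - a)) / sin (b - a)"
  have sin_pos: "sin (b - a) > 0" "sin (c - b) > 0" "sin (a - c) > 0"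
    using triangle_sin_turn_pos[OF assms, of k] triangle_sin_turn_pos[OF assms, of "k + 1"]
      triangle_sin_turn_pos[OF assms, of "k - 1"]
    unfolding turn_succ turn_pred by (auto simp: turn_def angles)
  have "L > 0"
    unfolding L_def by (rule side_length_pos[OF sin_pos]) (use xy in \<open>auto simp: angles offsets\<close>)
  have "tri_vertex w (k - 1) - tri_vertex w k = vector [L * sin b, - L * cos b]"
    unfolding L_def vertex_difference(1,2)[symmetric, OF sin_pos(1,2)[THEN less_imp_neq, symmetric]]
    by (simp add: tri_vertex_def Let_def angles offsets vec_eq_iff forall_2)
  then have "dist (tri_vertex w (k - 1)) (tri_vertex w k) = sqrt ((L * sin b)\<^sup>2 + (- L * cos b)\<^sup>2)"
    by (simp only: dist_norm norm_vec_def L2_set_def sum_2 vector_2 real_norm_def power2_abs)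
  also have "\<dots> = L"
    using \<open>L > 0\<close> by (simp add: power_mult_distrib flip: distrib_left)
  finally show ?thesis
    unfolding L_def turn_succ by (simp add: turn_def angles offsets)
qed

lemma half_side_length_half_tan:
  fixes b :: real
  assumes "b \<noteq> 0"
  shows "(y - x * ((1 - b\<^sup>2) / (1 + b\<^sup>2))) / (2 * b / (1 + b\<^sup>2))
       = (b * (x + y) + (y - x) / b) / 2"
proof -
  have "1 + b\<^sup>2 \<noteq> 0"
    using zero_le_power2[of b] by linarith
  with assms show ?thesis by (simp add: divide_simps) algebra
qed

text \<open>Each side is the sum of two terms attached to its end vertices; at every vertex the
  terms (y - x) / b of the two sides meeting there cancel.\<close>

lemma perimeter_eq_half_tan_sum:
  assumes "is_triangle w"
  shows "perimeter w = (\<Sum>k\<in>UNIV. half_tan w k * (tri_p w (k - 1) + tri_p w k))"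
proof -
  have nonzero: "half_tan w k \<noteq> 0" for k
    using triangle_half_tan_pos[OF assms, of k] by simp
  have "perimeter w = (\<Sum>k\<in>UNIV.
        (half_tan w (k + 1) * (tri_p w k + tri_p w (k + 1))
          + (tri_p w (k + 1) - tri_p w k) / half_tan w (k + 1)) / 2
      + (half_tan w k * (tri_p w k + tri_p w (k - 1))
          + (tri_p w (k - 1) - tri_p w k) / half_tan w k) / 2)"
    unfolding perimeter_def triangle_side_length[OF assms] sin_turn triangle_cos_turn[OF assms]
    by (simp only: half_side_length_half_tan nonzero not_False_eq_True)
  also have "\<dots> = (\<Sum>k\<in>UNIV. half_tan w k * (tri_p w (k - 1) + tri_p w k))"
    using nonzero by (simp add: sum_3 numerals_3 field_simps)
  finally show ?thesis .
qed

lemma eventually_is_triangle: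
  assumes "is_triangle z"
  shows "eventually is_triangle (at z)"
proof -
  obtain x y where xy: "\<And>i. x * cos (tri_alpha z i) + y * sin (tri_alpha z i) < tri_p z i"
    using assms unfolding is_triangle_def by blast
  have "\<forall>\<^sub>F w in at z. \<forall>i. sin (tri_alpha w (i + 1) - tri_alpha w i) > 0
          \<and> x * cos (tri_alpha w i) + y * sin (tri_alpha w i) < tri_p w i"
  proof (rule eventually_all_finite)
    fix i :: 3
    have lim_sin: "((\<lambda>w. sin (tri_alpha w (i + 1) - tri_alpha w i))
             \<longlongrightarrow> sin (tri_alpha z (i + 1) - tri_alpha z i)) (at z)"
      and lim_gap: "((\<lambda>w. tri_p w i - (x * cos (tri_alpha w i) + y * sin (tri_alpha w i)))
             \<longlongrightarrow> tri_p z i - (x * cos (tri_alpha z i) + y * sin (tri_alpha z i))) (at z)"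
      unfolding tri_alpha_def tri_p_def by (intro tendsto_intros)+
    have "sin (tri_alpha z (i + 1) - tri_alpha z i) > 0"
      using assms unfolding is_triangle_def by blast
    then have "\<forall>\<^sub>F w in at z. sin (tri_alpha w (i + 1) - tri_alpha w i) > 0
          \<and> tri_p w i - (x * cos (tri_alpha w i) + y * sin (tri_alpha w i)) > 0"
      using xy[of i]
      by (intro eventually_conj order_tendstoD(1)[OF lim_sin] order_tendstoD(1)[OF lim_gap]) auto
    then show "\<forall>\<^sub>F w in at z. sin (tri_alpha w (i + 1) - tri_alpha w i) > 0
          \<and> x * cos (tri_alpha w i) + y * sin (tri_alpha w i) < tri_p w i"
      by (rule eventually_mono) simp
  qed
  then show ?thesis
    by (rule eventually_mono) (auto simp: is_triangle_def)
qed

lemma has_derivative_tri_p: "((\<lambda>w. tri_p w k) has_derivative (\<lambda>v. tri_p v k)) F"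
  unfolding tri_p_def
  by (intro bounded_linear_imp_has_derivative bounded_linear_compose[OF bounded_linear_vec_nth bounded_linear_snd])

lemma bounded_linear_turn: "bounded_linear (\<lambda>w. turn w k)"
  unfolding turn_def tri_alpha_def
  by (intro bounded_linear_sub bounded_linear_compose[OF bounded_linear_vec_nth bounded_linear_fst])

lemma has_derivative_half_tan:
  assumes "cos (turn z k / 2) \<noteq> 0"
  shows "((\<lambda>w. half_tan w k) has_derivative (\<lambda>v. (1 + (half_tan z k)\<^sup>2) / 2 * turn v k)) (at z)"
proof -
  have "((\<lambda>w. turn w k / 2) has_derivative (\<lambda>v. turn v k / 2)) (at z)"
    by (intro bounded_linear_imp_has_derivative bounded_linear_compose[OF bounded_linear_divide bounded_linear_turn])
  from has_derivative_tan[OF assms this] show ?thesis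
    unfolding half_tan_def by (rule has_derivative_eq_rhs) (simp add: tan_sec[OF assms] field_simps)
qed

definition perimeter_coeff :: "tri \<Rightarrow> 3 \<Rightarrow> real" where
  "perimeter_coeff z k = half_tan z k + half_tan z (k + 1)"

lemma triangle_perimeter_coeff_pos: "is_triangle z \<Longrightarrow> perimeter_coeff z k > 0"
  unfolding perimeter_coeff_def by (simp add: add_pos_pos triangle_half_tan_pos)

definition perimeter_grad :: "tri \<Rightarrow> tri" where
  "perimeter_grad z =
     ((\<chi> k. (1 + (half_tan z k)\<^sup>2) / 2 * (tri_p z (k - 1) + tri_p z k)
           - (1 + (half_tan z (k + 1))\<^sup>2) / 2 * (tri_p z k + tri_p z (k + 1))),
      (\<chi> k. perimeter_coeff z k))"

lemma has_derivative_perimeter: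
  assumes "is_triangle z"
  shows "(perimeter has_derivative (\<lambda>v. perimeter_grad z \<bullet> v)) (at z)"
proof (rule has_derivative_transform_eventually)
  let ?P = "\<lambda>w. \<Sum>k\<in>UNIV. half_tan w k * (tri_p w (k - 1) + tri_p w k)"
  have "(?P has_derivative (\<lambda>v. \<Sum>k\<in>UNIV. half_tan z k * (tri_p v (k - 1) + tri_p v k)
          + (1 + (half_tan z k)\<^sup>2) * turn v k * (tri_p z (k - 1) + tri_p z k) / 2)) (at z)"
    using has_derivative_half_tan[OF triangle_cos_half_turn[OF assms]]
    by (auto intro!: derivative_eq_intros has_derivative_tri_p)
  then show "(?P has_derivative (\<lambda>v. perimeter_grad z \<bullet> v)) (at z)"
    by (rule has_derivative_eq_rhs)
      (auto simp: perimeter_grad_def perimeter_coeff_def inner_prod_def inner_vec_def sum_3 numerals_3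
        turn_def tri_alpha_def tri_p_def field_simps)
  show "\<forall>\<^sub>F w in at z. ?P w = perimeter w"
    using eventually_is_triangle[OF assms] by (rule eventually_mono) (simp add: perimeter_eq_half_tan_sum)
  show "?P z = perimeter z"
    by (simp add: perimeter_eq_half_tan_sum[OF assms])
qed simp

section \<open>The fields and their brackets\<close>

definition phi_tan :: "real \<Rightarrow> real \<Rightarrow> real \<Rightarrow> real \<Rightarrow> real \<Rightarrow> real" where
  "phi_tan a b x y u = ((1 + b\<^sup>2) * (u + y) - (1 + a\<^sup>2) * (x + y)) / (2 * (a + b))"

lemma Phi_quotient_eq_phi_tan:
  assumes "cos s \<noteq> 0" "cos t \<noteq> 0"
  shows "((cos s)\<^sup>2 * (u + y) - (cos t)\<^sup>2 * (x + y)) / (2 * sin (s + t) * cos s * cos t)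
       = phi_tan (tan s) (tan t) x y u"
proof -
  have sec: "1 + (tan s)\<^sup>2 = 1 / (cos s)\<^sup>2" "1 + (tan t)\<^sup>2 = 1 / (cos t)\<^sup>2"
    using tan_sec[OF assms(1)] tan_sec[OF assms(2)] by (simp_all add: inverse_eq_divide power_one_over)
  have sum: "tan s + tan t = sin (s + t) / (cos s * cos t)"
    using assms unfolding tan_def sin_add by (simp add: field_simps)
  show ?thesis
    using assms unfolding phi_tan_def sec sum
    by (cases "sin (s + t) = 0") (simp_all add: field_simps power2_eq_square)
qed

lemma Phi_eq_phi_tan:
  assumes "cos (turn w k / 2) \<noteq> 0" "cos (turn w (k + 1) / 2) \<noteq> 0"
  shows "Phi k w
       = phi_tan (half_tan w k) (half_tan w (k + 1)) (tri_p w (k - 1)) (tri_p w k) (tri_p w (k + 1))"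
proof -
  have arg: "(tri_alpha w (k + 1) - tri_alpha w (k - 1)) / 2 = turn w k / 2 + turn w (k + 1) / 2"
    unfolding turn_succ by (simp add: turn_def field_simps)
  have "Phi k w = ((cos (turn w k / 2))\<^sup>2 * (tri_p w (k + 1) + tri_p w k)
      - (cos (turn w (k + 1) / 2))\<^sup>2 * (tri_p w (k - 1) + tri_p w k))
      / (2 * sin (turn w k / 2 + turn w (k + 1) / 2) * cos (turn w k / 2) * cos (turn w (k + 1) / 2))"
    unfolding Phi_def Let_def arg unfolding turn_succ unfolding turn_def ..
  then show ?thesis
    unfolding Phi_quotient_eq_phi_tan[OF assms] half_tan_def .
qed

text \<open>Implicit differentiation of 2 (a + b) phi_tan a b x y u = (1 + b^2)(u + y) - (1 + a^2)(x + y).\<close>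

lemma has_derivative_phi_tan:
  assumes "(a has_derivative a') (at z)" "(b has_derivative b') (at z)"
    and "(x has_derivative x') (at z)" "(y has_derivative y') (at z)" "(u has_derivative u') (at z)"
    and "a z + b z \<noteq> 0"
  shows "((\<lambda>w. phi_tan (a w) (b w) (x w) (y w) (u w)) has_derivative
     (\<lambda>v. (b z * b' v * (u z + y z) + (1 + (b z)\<^sup>2) * (u' v + y' v) / 2
           - a z * a' v * (x z + y z) - (1 + (a z)\<^sup>2) * (x' v + y' v) / 2
           - (a' v + b' v) * phi_tan (a z) (b z) (x z) (y z) (u z)) / (a z + b z))) (at z)"
  unfolding phi_tan_def
proof (rule has_derivative_eq_rhs, (rule derivative_intros assms)+)
  show "2 * (a z + b z) \<noteq> 0"
    using assms(6) by simp
qed (rule ext, use assms(6) in \<open>simp add: divide_simps power2_eq_square\<close>, algebra)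

definition Phi_diff :: "3 \<Rightarrow> tri \<Rightarrow> tri \<Rightarrow> real" where
  "Phi_diff k z v =
     (let a = half_tan z k; b = half_tan z (k + 1);
          da = (1 + a\<^sup>2) / 2 * turn v k; db = (1 + b\<^sup>2) / 2 * turn v (k + 1)
      in (b * db * (tri_p z (k + 1) + tri_p z k) + (1 + b\<^sup>2) * (tri_p v (k + 1) + tri_p v k) / 2
          - a * da * (tri_p z (k - 1) + tri_p z k) - (1 + a\<^sup>2) * (tri_p v (k - 1) + tri_p v k) / 2
          - (da + db) * Phi k z) / (a + b))"

lemma has_derivative_Phi:
  assumes "is_triangle z"
  shows "(Phi k has_derivative Phi_diff k z) (at z)"
proof (rule has_derivative_transform_eventually)
  let ?phi = "\<lambda>w. phi_tan (half_tan w k) (half_tan w (k + 1))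
                  (tri_p w (k - 1)) (tri_p w k) (tri_p w (k + 1))"
  have "half_tan z k + half_tan z (k + 1) \<noteq> 0"
    using triangle_half_tan_pos[OF assms, of k] triangle_half_tan_pos[OF assms, of "k + 1"] by simp
  from has_derivative_phi_tan[OF has_derivative_half_tan has_derivative_half_tan
      has_derivative_tri_p has_derivative_tri_p has_derivative_tri_p this]
  show "(?phi has_derivative Phi_diff k z) (at z)"
    unfolding Phi_diff_def Let_def
      Phi_eq_phi_tan[OF triangle_cos_half_turn[OF assms] triangle_cos_half_turn[OF assms]]
    using triangle_cos_half_turn[OF assms] by blast
  show "\<forall>\<^sub>F w in at z. ?phi w = Phi k w"
    using eventually_is_triangle[OF assms]
    by (rule eventually_mono) (simp add: Phi_eq_phi_tan triangle_cos_half_turn)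
qed (simp_all add: Phi_eq_phi_tan triangle_cos_half_turn[OF assms])

lemma xi_eq: "xi k = (\<lambda>w. (axis k 1, Phi k w *\<^sub>R axis k 1))"
  unfolding xi_def by (simp add: fun_eq_iff vec_eq_iff axis_def)

lemma tri_alpha_xi: "tri_alpha (xi k z) j = (if j = k then 1 else 0)"
  by (simp add: tri_alpha_def xi_def)

lemma tri_p_xi: "tri_p (xi k z) j = (if j = k then Phi k z else 0)"
  by (simp add: tri_p_def xi_def)

lemma lie_bracket_xi:
  assumes "(Phi i has_derivative Di) (at z)" "(Phi j has_derivative Dj) (at z)"
  shows "lie_bracket (xi i) (xi j) z = (0, Dj (xi i z) *\<^sub>R axis j 1 - Di (xi j z) *\<^sub>R axis i 1)"
proof -
  have "frechet_derivative (xi k) (at z) = (\<lambda>v. (0, D v *\<^sub>R axis k 1))"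
    if "(Phi k has_derivative D) (at z)" for k D
  proof (rule frechet_derivative_at[symmetric])
    show "(xi k has_derivative (\<lambda>v. (0, D v *\<^sub>R axis k 1))) (at z)"
      unfolding xi_eq by (auto intro!: derivative_eq_intros that)
  qed
  then show ?thesis
    unfolding lie_bracket_def using assms by simp
qed

definition bracket_weight :: "tri \<Rightarrow> 3 \<Rightarrow> real" where
  "bracket_weight z k = (1 + (half_tan z (k + 1))\<^sup>2)
     * (half_tan z (k + 1) * (tri_p z k + tri_p z (k + 1)) + Phi (k + 1) z - Phi k z) / 2"

lemma Phi_diff_succ_xi: "Phi_diff (k + 1) z (xi k z) = bracket_weight z k / perimeter_coeff z (k + 1)"
  unfolding Phi_diff_def Let_def bracket_weight_def perimeter_coeff_def turn_succ
  by (simp add: turn_def tri_alpha_xi tri_p_xi) (simp add: divide_simps algebra_simps)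

lemma Phi_diff_xi_succ: "Phi_diff k z (xi (k + 1) z) = bracket_weight z k / perimeter_coeff z k"
  unfolding Phi_diff_def Let_def bracket_weight_def perimeter_coeff_def turn_succ
  by (simp add: turn_def tri_alpha_xi tri_p_xi) (simp add: divide_simps algebra_simps)

lemma lie_bracket_xi_succ:
  assumes "is_triangle z"
  shows "lie_bracket (xi k) (xi (k + 1)) z
       = bracket_weight z k *\<^sub>R
           (0, axis (k + 1) (1 / perimeter_coeff z (k + 1)) - axis k (1 / perimeter_coeff z k))"
  unfolding lie_bracket_xi[OF has_derivative_Phi[OF assms] has_derivative_Phi[OF assms]]
    Phi_diff_succ_xi Phi_diff_xi_succ
  by (simp add: axis_def vec_eq_iff)

text \<open>On the right, the weighted sum of the p's divided by the sum of the sines of the turning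
  angles is the inradius (move the incentre to the origin), so
  bracket_weight z k = (1 + T_(k+1)^2)(T_(k-1) + T_k) r / 2 with T = half_tan z.\<close>

lemma bracket_weight_identity:
  fixes t0 t1 t2 :: real
  assumes "t0 > 0" "t1 > 0" "t2 > 0" "t0 + t1 + t2 = t0 * t1 * t2"
  shows "(t1 * (p0 + p1) + phi_tan t1 t2 p0 p1 p2 - phi_tan t0 t1 p2 p0 p1)
           * (2 * t0 / (1 + t0\<^sup>2) + 2 * t1 / (1 + t1\<^sup>2) + 2 * t2 / (1 + t2\<^sup>2))
       = (t0 + t2) * (2 * t2 / (1 + t2\<^sup>2) * p0 + 2 * t0 / (1 + t0\<^sup>2) * p1 + 2 * t1 / (1 + t1\<^sup>2) * p2)"
proof -
  have "1 + t0\<^sup>2 > 0" "1 + t1\<^sup>2 > 0" "1 + t2\<^sup>2 > 0"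
    by (auto simp: add_pos_nonneg)
  with assms show ?thesis
    unfolding phi_tan_def by (simp add: divide_simps power2_eq_square) algebra
qed

lemma sin_weighted_sum_pos:
  fixes a b c p q r x y :: real
  assumes "sin (b - a) > 0" "sin (c - b) > 0" "sin (a - c) > 0"
    and "x * cos a + y * sin a < p" "x * cos b + y * sin b < q" "x * cos c + y * sin c < r"
  shows "sin (c - b) * p + sin (a - c) * q + sin (b - a) * r > 0"
proof -
  have "sin (c - b) * (x * cos a + y * sin a) + sin (a - c) * (x * cos b + y * sin b)
      + sin (b - a) * (x * cos c + y * sin c) = 0"
    unfolding sin_diff by (simp add: algebra_simps)
  moreover have "sin (c - b) * (x * cos a + y * sin a) < sin (c - b) * p"
      "sin (a - c) * (x * cos b + y * sin b) < sin (a - c) * q"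
      "sin (b - a) * (x * cos c + y * sin c) < sin (b - a) * r"
    using assms by (auto intro: mult_strict_left_mono)
  ultimately show ?thesis by linarith
qed

lemma bracket_weight_pos:
  assumes "is_triangle z"
  shows "bracket_weight z k > 0"
proof -
  define t0 t1 t2 where ts: "t0 = half_tan z k" "t1 = half_tan z (k + 1)" "t2 = half_tan z (k - 1)"
  define W where "W = t1 * (tri_p z k + tri_p z (k + 1)) + Phi (k + 1) z - Phi k z"
  have pos: "t0 > 0" "t1 > 0" "t2 > 0"
    unfolding ts using triangle_half_tan_pos[OF assms] by auto
  have sin_pos: "2 * t0 / (1 + t0\<^sup>2) > 0" "2 * t1 / (1 + t1\<^sup>2) > 0" "2 * t2 / (1 + t2\<^sup>2) > 0"
    unfolding ts sin_turn[symmetric] using triangle_sin_turn_pos[OF assms] by auto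
  obtain x y where xy: "\<And>i. x * cos (tri_alpha z i) + y * sin (tri_alpha z i) < tri_p z i"
    using assms unfolding is_triangle_def by blast
  have S: "2 * t2 / (1 + t2\<^sup>2) * tri_p z k + 2 * t0 / (1 + t0\<^sup>2) * tri_p z (k + 1)
      + 2 * t1 / (1 + t1\<^sup>2) * tri_p z (k - 1) > 0"
    using sin_weighted_sum_pos[where a = "tri_alpha z k" and b = "tri_alpha z (k + 1)"
        and c = "tri_alpha z (k - 1)", OF _ _ _ xy xy xy]
      triangle_sin_turn_pos[OF assms, of "k + 1", unfolded turn_succ]
      triangle_sin_turn_pos[OF assms, of "k - 1", unfolded turn_pred]
      triangle_sin_turn_pos[OF assms, of k, unfolded turn_def]
    unfolding ts sin_turn[symmetric] turn_pred turn_succ by (simp add: turn_def)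
  have "W * (2 * t0 / (1 + t0\<^sup>2) + 2 * t1 / (1 + t1\<^sup>2) + 2 * t2 / (1 + t2\<^sup>2))
      = (t0 + t2) * (2 * t2 / (1 + t2\<^sup>2) * tri_p z k + 2 * t0 / (1 + t0\<^sup>2) * tri_p z (k + 1)
          + 2 * t1 / (1 + t1\<^sup>2) * tri_p z (k - 1))"
    using bracket_weight_identity[OF pos triangle_half_tan_sum_eq_prod[OF assms, of k, folded ts]]
    unfolding W_def ts
      Phi_eq_phi_tan[OF triangle_cos_half_turn[OF assms] triangle_cos_half_turn[OF assms]]
    by simp
  with S sin_pos pos have "W > 0"
    by (metis add_pos_pos mult_pos_pos zero_less_mult_pos2)
  then show ?thesis
    unfolding bracket_weight_def W_def[unfolded ts] by (simp add: add_pos_nonneg)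
qed

section \<open>The kernel of the differential of the perimeter\<close>

lemma perimeter_grad_xi:
  assumes "is_triangle z"
  shows "perimeter_grad z \<bullet> xi k z = 0"
proof -
  have "perimeter_grad z \<bullet> xi k z = fst (perimeter_grad z) $ k + perimeter_coeff z k * Phi k z"
    by (simp add: xi_eq inner_prod_def perimeter_grad_def inner_axis)
  also have "\<dots> = 0"
    using triangle_perimeter_coeff_pos[OF assms, of k]
    unfolding Phi_eq_phi_tan[OF triangle_cos_half_turn[OF assms] triangle_cos_half_turn[OF assms]]
    by (simp add: perimeter_grad_def perimeter_coeff_def phi_tan_def field_simps)
  finally show ?thesis .
qed

lemma perimeter_grad_lie_bracket_xi_succ:
  assumes "is_triangle z"
  shows "perimeter_grad z \<bullet> lie_bracket (xi k) (xi (k + 1)) z = 0"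
  using triangle_perimeter_coeff_pos[OF assms, of k] triangle_perimeter_coeff_pos[OF assms, of "k + 1"]
  by (simp add: lie_bracket_xi_succ[OF assms] perimeter_grad_def inner_prod_def inner_diff_right inner_axis)

lemma perimeter_kernel_subset_span:
  assumes "is_triangle z"
  shows "{v. perimeter_grad z \<bullet> v = 0}
     \<subseteq> span {xi 1 z, xi 2 z, xi 3 z, lie_bracket (xi 1) (xi 2) z, lie_bracket (xi 2) (xi 3) z}"
    (is "_ \<subseteq> span ?S")
proof
  fix v assume "v \<in> {v. perimeter_grad z \<bullet> v = 0}"
  then have tangent: "perimeter_grad z \<bullet> v = 0" by simp
  define c where "c = perimeter_coeff z"
  define w where "w = bracket_weight z"
  define q where "q = snd v - (\<chi> k. fst v $ k * Phi k z)"
  have nonzero: "c k \<noteq> 0" "w k \<noteq> 0" for k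
    unfolding c_def w_def
    using triangle_perimeter_coeff_pos[OF assms, of k] bracket_weight_pos[OF assms, of k] by simp_all
  have decomp: "v = fst v $ 1 *\<^sub>R xi 1 z + fst v $ 2 *\<^sub>R xi 2 z + fst v $ 3 *\<^sub>R xi 3 z + (0, q)"
    unfolding q_def by (simp add: prod_eq_iff vec_eq_iff forall_3 xi_def)
  have "perimeter_grad z \<bullet> (0, q) = 0"
    using tangent perimeter_grad_xi[OF assms] by (subst (asm) decomp) (simp add: inner_add_right)
  then have q_tangent: "c 1 * q $ 1 + c 2 * q $ 2 + c 3 * q $ 3 = 0"
    by (simp add: perimeter_grad_def inner_prod_def inner_vec_def sum_3 c_def)
  have q_in_brackets: "(0, q) = (- c 1 * q $ 1 / w 1) *\<^sub>R lie_bracket (xi 1) (xi 2) z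
      + (c 3 * q $ 3 / w 2) *\<^sub>R lie_bracket (xi 2) (xi 3) z"
    unfolding lie_bracket_xi_succ[OF assms, of 1, unfolded numerals_3]
      lie_bracket_xi_succ[OF assms, of 2, unfolded numerals_3] c_def[symmetric] w_def[symmetric]
    using nonzero q_tangent by (simp add: prod_eq_iff vec_eq_iff forall_3 axis_def field_simps)
  have "v = fst v $ 1 *\<^sub>R xi 1 z + fst v $ 2 *\<^sub>R xi 2 z + fst v $ 3 *\<^sub>R xi 3 z
      + (- c 1 * q $ 1 / w 1) *\<^sub>R lie_bracket (xi 1) (xi 2) z
      + (c 3 * q $ 3 / w 2) *\<^sub>R lie_bracket (xi 2) (xi 3) z"
    using decomp unfolding q_in_brackets by (simp only: add.assoc)
  also have "\<dots> \<in> span ?S"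
    by (intro span_add span_scale span_base) auto
  finally show "v \<in> span ?S" .
qed

theorem mainTheorem12:
  fixes z :: tri
  assumes "is_triangle z"
  shows "\<exists>P'. (perimeter has_derivative P') (at z) \<and>
           dim {v. P' v = 0} = 5 \<and>
           span {xi 1 z, xi 2 z, xi 3 z, lie_bracket (xi 1) (xi 2) z, lie_bracket (xi 2) (xi 3) z}
             = {v. P' v = 0} \<and>
           span {xi 1 z, xi 2 z, xi 3 z, lie_bracket (xi 1) (xi 2) z, lie_bracket (xi 2) (xi 3) z,
                 lie_bracket (xi 3) (xi 1) z}
             = {v. P' v = 0}"
proof (intro exI conjI)
  let ?K = "{v. perimeter_grad z \<bullet> v = 0}"
  let ?S = "{xi 1 z, xi 2 z, xi 3 z, lie_bracket (xi 1) (xi 2) z, lie_bracket (xi 2) (xi 3) z}"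
  let ?S' = "{xi 1 z, xi 2 z, xi 3 z, lie_bracket (xi 1) (xi 2) z, lie_bracket (xi 2) (xi 3) z,
              lie_bracket (xi 3) (xi 1) z}"
  have tangent: "?S' \<subseteq> ?K"
    using perimeter_grad_xi[OF assms] perimeter_grad_lie_bracket_xi_succ[OF assms, of 1]
      perimeter_grad_lie_bracket_xi_succ[OF assms, of 2] perimeter_grad_lie_bracket_xi_succ[OF assms, of 3]
    by (simp add: numerals_3)
  have "snd (perimeter_grad z) $ 1 > 0"
    using triangle_perimeter_coeff_pos[OF assms] by (simp add: perimeter_grad_def)
  then have "perimeter_grad z \<noteq> 0"
    by auto
  then show "dim ?K = 5"
    by (simp add: dim_hyperplane)
  show "span ?S = ?K"
    using tangent perimeter_kernel_subset_span[OF assms] by (intro span_subspace subspace_hyperplane) auto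
  show "span ?S' = ?K"
    using tangent perimeter_kernel_subset_span[OF assms] span_mono[of ?S ?S']
    by (intro span_subspace subspace_hyperplane) auto
qed (fact has_derivative_perimeter[OF assms])

end
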